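(* Let $n,m\geq 1$, $k=(k_1,\dots,k_n)\in\mathbb{Z}_{\geq1}^n$, $u=(u_1,\dots,u_m)\in\mathbb{Z}_{\geq0}^m$, $T\geq 0$, and for each $e\in[m]$ let $c_e:\mathbb{Z}_{\ge0}\to\mathbb{R}$ be non-decreasing. Let $K=\sum_ik_i$, $K_2=\sum_i k_i(k_i-1)$, $k!=\prod_ik_i!$, $L(k,u)=\{\alpha\in\mathbb{Z}^m:0\leq\alpha\leq u,\ |\alpha|=K\}$ and $\bar\Phi(\alpha)=\sum_{e=1}^m\sum_{j=1}^{\alpha_e}c_e(j)$. Then the $K$-homogeneous polynomial in $m$ variables $$g(x_1,\dots,x_m)=\sum_{\alpha\in L(k,u)}\frac{K!}{k!\,\alpha!}\exp\Big(-\frac{K_2}{K^2}\sum_{j=1}^m\alpha_j(\alpha_j-1)\Big)\exp\big(-T\bar\Phi(\alpha)\big)\,x^\alpha$$ is strongly log-concave.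
   Context: Notation: $|\alpha|=\sum_j\alpha_j$, $\alpha!=\prod_j\alpha_j!$, $x^\alpha=\prod_jx_j^{\alpha_j}$, $0\le\alpha\le u$ coordinatewise. This polynomial arises from $u$-capacitated $k$-uniform congestion games (player $i$ chooses any $k_i$-subset of resources $[m]$, resource $e$ can be used by at most $u_e$ players). A polynomial $p$ with non-negative coefficients is log-concave on $\mathbb{R}^m_{>0}$ if the Hessian of $\log p$ is negative semidefinite there (the zero polynomial is considered log-concave); $p$ is strongly log-concave (SLC) if $\partial^\beta p=\prod_i\partial_{x_i}^{\beta_i}p$ is log-concave for every $\beta\in\mathbb{Z}^m_{\geq0}$. *)

theory Defs
  imports Complex_Main
begin

text \<open>A polynomial in the variables x_j (j ranging over the finite type 'm) with real
coefficients is represented by its coefficient function on exponent vectors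
alpha :: 'm => nat (finitely supported in all uses below).\<close>

type_synonym 'm mpoly_coeffs = "('m \<Rightarrow> nat) \<Rightarrow> real"

definition mpoly_eval :: "'m::finite mpoly_coeffs \<Rightarrow> ('m \<Rightarrow> real) \<Rightarrow> real" where
  "mpoly_eval p x = (\<Sum>\<alpha>\<in>{\<alpha>. p \<alpha> \<noteq> 0}. p \<alpha> * (\<Prod>j\<in>UNIV. x j ^ \<alpha> j))"

definition pdiff :: "'m \<Rightarrow> 'm mpoly_coeffs \<Rightarrow> 'm mpoly_coeffs" where
  "pdiff i p = (\<lambda>\<alpha>. real (\<alpha> i + 1) * p (\<alpha>(i := \<alpha> i + 1)))"

definition pdiffs :: "('m::finite \<Rightarrow> nat) \<Rightarrow> 'm mpoly_coeffs \<Rightarrow> 'm mpoly_coeffs" where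
  "pdiffs \<beta> p = (\<lambda>\<alpha>. (\<Prod>j\<in>UNIV. pochhammer (real (\<alpha> j + 1)) (\<beta> j)) * p (\<lambda>j. \<alpha> j + \<beta> j))"

definition hess_log :: "'m::finite mpoly_coeffs \<Rightarrow> ('m \<Rightarrow> real) \<Rightarrow> 'm \<Rightarrow> 'm \<Rightarrow> real" where
  "hess_log p x i j =
     (mpoly_eval p x * mpoly_eval (pdiff i (pdiff j p)) x
      - mpoly_eval (pdiff i p) x * mpoly_eval (pdiff j p) x) / (mpoly_eval p x)^2"

definition neg_semidef :: "('m::finite \<Rightarrow> 'm \<Rightarrow> real) \<Rightarrow> bool" where
  "neg_semidef H \<longleftrightarrow> (\<forall>v::'m \<Rightarrow> real. (\<Sum>i\<in>UNIV. \<Sum>j\<in>UNIV. v i * H i j * v j) \<le> 0)"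

definition log_concave_poly :: "'m::finite mpoly_coeffs \<Rightarrow> bool" where
  "log_concave_poly p \<longleftrightarrow> (\<forall>\<alpha>. p \<alpha> = 0) \<or>
     (\<forall>x. (\<forall>j. 0 < x j) \<longrightarrow> 0 < mpoly_eval p x \<and> neg_semidef (hess_log p x))"

definition strongly_log_concave :: "'m::finite mpoly_coeffs \<Rightarrow> bool" where
  "strongly_log_concave p \<longleftrightarrow> (\<forall>\<beta>. log_concave_poly (pdiffs \<beta> p))"

definition Phi_bar :: "('m::finite \<Rightarrow> nat \<Rightarrow> real) \<Rightarrow> ('m \<Rightarrow> nat) \<Rightarrow> real" where
  "Phi_bar c \<alpha> = (\<Sum>e\<in>UNIV. \<Sum>j=1..\<alpha> e. c e j)"

definition cong_poly ::
  "('n::finite \<Rightarrow> nat) \<Rightarrow> ('m::finite \<Rightarrow> nat) \<Rightarrow> real \<Rightarrow> ('m \<Rightarrow> nat \<Rightarrow> real) \<Rightarrow> 'm mpoly_coeffs" where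
  "cong_poly k u T c = (\<lambda>\<alpha>.
     (let K = (\<Sum>i\<in>UNIV. k i);
          K2 = (\<Sum>i\<in>UNIV. real (k i) * (real (k i) - 1))
      in if (\<forall>e. \<alpha> e \<le> u e) \<and> (\<Sum>e\<in>UNIV. \<alpha> e) = K
         then fact K / ((\<Prod>i\<in>UNIV. fact (k i)) * (\<Prod>e\<in>UNIV. fact (\<alpha> e)))
              * exp (- (K2 / (real K)^2) * (\<Sum>j\<in>UNIV. real (\<alpha> j) * (real (\<alpha> j) - 1)))
              * exp (- T * Phi_bar c \<alpha>)
         else 0))"

end

theory Submission
  imports Defs "HOL-Analysis.Analysis"
begin

text \<open>Up to the factor \<open>K!/k!\<close>, \<open>g\<close> is the generating polynomial
  \<open>\<Sum>\<^sub>\<alpha> \<Prod>\<^sub>e w\<^sub>e(\<alpha>\<^sub>e)/\<alpha>\<^sub>e! x\<^sup>\<alpha>\<close> over \<open>L(k,u)\<close> of the weights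
  \<open>w\<^sub>e(j) = exp(-a j(j-1) - T \<Sigma>\<^sub>i\<^sub>\<le>\<^sub>j c\<^sub>e(i))\<close>, which are log-concave in \<open>j\<close> since \<open>a \<ge> 0\<close>
  and \<open>c\<^sub>e\<close> is non-decreasing. Derivatives of such polynomials are of the same form (shifted weights,
  smaller box), so it suffices to show that each of them is log-concave on the positive orthant.
  For a homogeneous \<open>p\<close> of degree \<open>d \<ge> 2\<close> this follows from the reverse
  Cauchy--Schwarz inequality \<open>(v\<^sup>T H v)(x\<^sup>T H x) \<le> (x\<^sup>T H v)\<^sup>2\<close> for the Hessian \<open>H\<close> of \<open>p\<close> at \<open>x > 0\<close>,
  which is proved by induction on \<open>d\<close>. In degree 2 the Hessian is a positive multiple of
  \<open>\<sigma> \<sigma>\<^sup>T - diag \<Lambda>\<close> with \<open>\<Lambda> \<ge> 0\<close> by log-concavity of the weights. In the inductive step Euler's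
  identity turns the inequalities for the partials \<open>\<partial>\<^sub>i p\<close> into \<open>H \<le> H D\<^sup>-\<^sup>1 H\<close> with
  \<open>D = diag (H x / x)\<close>, and a Perron--Frobenius argument for \<open>H\<close>, whose off-diagonal entries are
  positive on its support, shows that \<open>H\<close> is negative semidefinite on \<open>(H x)\<^sup>\<bottom>\<close>.\<close>

section \<open>Symmetric bilinear forms\<close>

definition bform :: "('m::finite \<Rightarrow> 'm \<Rightarrow> real) \<Rightarrow> ('m \<Rightarrow> real) \<Rightarrow> ('m \<Rightarrow> real) \<Rightarrow> real" where
  "bform H a b = (\<Sum>i\<in>UNIV. \<Sum>j\<in>UNIV. a i * H i j * b j)"

definition mat_vec :: "('m::finite \<Rightarrow> 'm \<Rightarrow> real) \<Rightarrow> ('m \<Rightarrow> real) \<Rightarrow> 'm \<Rightarrow> real" where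
  "mat_vec H b i = (\<Sum>j\<in>UNIV. H i j * b j)"

definition reverse_cauchy_schwarz :: "('m::finite \<Rightarrow> 'm \<Rightarrow> real) \<Rightarrow> ('m \<Rightarrow> real) \<Rightarrow> bool" where
  "reverse_cauchy_schwarz H x \<longleftrightarrow> (\<forall>v. bform H v v * bform H x x \<le> (bform H x v)\<^sup>2)"

lemma bform_eq_sum_mat_vec: "bform H a b = (\<Sum>i\<in>UNIV. a i * mat_vec H b i)"
  by (simp add: bform_def mat_vec_def sum_distrib_left mult.assoc)

lemma bform_commute:
  assumes "\<And>i j. H i j = H j i"
  shows "bform H a b = bform H b a"
  unfolding bform_def by (subst sum.swap) (simp add: assms mult.commute mult.left_commute)

lemma bform_line:
  "bform H (\<lambda>i. a i + t * b i) (\<lambda>i. a i + t * b i)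
     = bform H a a + t * (bform H a b + bform H b a) + t\<^sup>2 * bform H b b"
  by (simp add: bform_def algebra_simps power2_eq_square sum.distrib sum_distrib_left)

lemma bform_scale: "bform H (\<lambda>i. c * a i) (\<lambda>i. c * a i) = c\<^sup>2 * bform H a a"
  by (simp add: bform_def algebra_simps sum_distrib_left power2_eq_square)

lemma linear_coeff_eq_0_if_nonpos:
  fixes a b :: real
  assumes "\<And>t. a * t + b * t\<^sup>2 \<le> 0"
  shows "a = 0"
proof -
  define s where "s = 1 / (\<bar>b\<bar> + 1)"
  have s: "s > 0" "1 + b * s > 0"
    unfolding s_def by (auto simp: field_simps abs_if split: if_splits)
  have "a\<^sup>2 * s * (1 + b * s) = a * (a * s) + b * (a * s)\<^sup>2"
    by (simp add: algebra_simps power2_eq_square)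
  also have "\<dots> \<le> 0" using assms .
  finally show "a = 0" using s by (simp add: mult_le_0_iff)
qed

lemma discriminant_le_if_nonpos:
  fixes P Q R t :: real
  assumes "R > 0" "P - 2 * t * Q + t\<^sup>2 * R \<le> 0"
  shows "P * R \<le> Q\<^sup>2"
proof -
  have "(t * R - Q)\<^sup>2 + P * R - Q\<^sup>2 = R * (P - 2 * t * Q + t\<^sup>2 * R)"
    by (simp add: algebra_simps power2_eq_square)
  also have "\<dots> \<le> 0" using assms by (simp add: mult_nonneg_nonpos)
  finally show ?thesis using zero_le_power2[of "t * R - Q"] by linarith
qed

text \<open>For a suitable \<open>t\<close> the vector \<open>v - t x\<close> lies in the hyperplane; the resulting
  quadratic inequality in \<open>t\<close> forces the discriminant condition.\<close>
lemma reverse_cauchy_schwarzI: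
  assumes sym: "\<And>i j. H i j = H j i" and pos: "0 < bform H x x"
    and hyperplane: "\<And>w. (\<Sum>i\<in>UNIV. s i * w i) = 0 \<Longrightarrow> bform H w w \<le> 0"
  shows "reverse_cauchy_schwarz H x"
  unfolding reverse_cauchy_schwarz_def
proof
  fix v
  have "(\<Sum>i\<in>UNIV. s i * x i) \<noteq> 0" using hyperplane[of x] pos by linarith
  then obtain t where "(\<Sum>i\<in>UNIV. s i * v i) = t * (\<Sum>i\<in>UNIV. s i * x i)"
    by (metis nonzero_eq_divide_eq)
  hence "(\<Sum>i\<in>UNIV. s i * (v i + (- t) * x i)) = 0"
    by (simp add: algebra_simps sum.distrib sum_subtractf sum_distrib_left)
  hence "bform H (\<lambda>i. v i + (- t) * x i) (\<lambda>i. v i + (- t) * x i) \<le> 0" by (rule hyperplane)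
  hence "bform H v v - 2 * t * bform H x v + t\<^sup>2 * bform H x x \<le> 0"
    unfolding bform_line bform_commute[OF sym, where a=v and b=x] by (simp add: algebra_simps)
  thus "bform H v v * bform H x x \<le> (bform H x v)\<^sup>2"
    by (rule discriminant_le_if_nonpos[OF pos])
qed

lemma bform_orthogonal_if_nonneg_zero:
  assumes "\<And>i j. G i j = G j i" and "\<And>t. 0 \<le> bform G (\<lambda>i. v i + t * h i) (\<lambda>i. v i + t * h i)"
    and "bform G v v = 0"
  shows "bform G v h = 0"
proof -
  have "- (2 * bform G v h) = 0"
  proof (rule linear_coeff_eq_0_if_nonpos)
    fix t
    show "- (2 * bform G v h) * t + (- bform G h h) * t\<^sup>2 \<le> 0"
      using assms(2)[of t] assms(3) unfolding bform_line bform_commute[OF assms(1), where a=h and b=v]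
      by (simp add: algebra_simps)
  qed
  thus ?thesis by simp
qed

lemma bform_diff_mat:
  "bform (\<lambda>i j. c * F i j - G i j) a b = c * bform F a b - bform G a b"
  by (simp add: bform_def algebra_simps sum_subtractf sum_distrib_left)

lemma mat_vec_diff_mat:
  "mat_vec (\<lambda>i j. c * F i j - G i j) v i = c * mat_vec F v i - mat_vec G v i"
  by (simp add: mat_vec_def algebra_simps sum_subtractf sum_distrib_left)

lemma bform_rank_one_minus_diag:
  assumes "\<And>i j. H i j = \<kappa> * (\<sigma> i * \<sigma> j - (if i = j then \<Lambda> i else 0))"
  shows "bform H a b = \<kappa> * ((\<Sum>i\<in>UNIV. \<sigma> i * a i) * (\<Sum>j\<in>UNIV. \<sigma> j * b j) - (\<Sum>i\<in>UNIV. \<Lambda> i * a i * b i))"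
proof -
  define Sb where "Sb = (\<Sum>j\<in>UNIV. \<sigma> j * b j)"
  have "a i * H i j * b j = \<kappa> * (\<sigma> i * a i) * (\<sigma> j * b j)
      - (if j = i then \<kappa> * (\<Lambda> i * a i * b i) else 0)" for i j
    by (auto simp: assms algebra_simps)
  hence "bform H a b = (\<Sum>i\<in>UNIV. \<kappa> * (\<sigma> i * a i) * Sb - \<kappa> * (\<Lambda> i * a i * b i))"
    unfolding bform_def Sb_def by (simp add: sum_subtractf sum_distrib_left)
  also have "\<dots> = \<kappa> * (\<Sum>i\<in>UNIV. \<sigma> i * a i) * Sb - \<kappa> * (\<Sum>i\<in>UNIV. \<Lambda> i * a i * b i)"
    by (simp add: sum_subtractf sum_distrib_left sum_distrib_right mult.assoc)
  finally show ?thesis unfolding Sb_def by (simp add: algebra_simps)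
qed

section \<open>A Perron--Frobenius argument\<close>

lemma continuous_on_coordinate [continuous_intros]: "continuous_on S (\<lambda>x::'a \<Rightarrow> real. x i)"
  by (rule continuous_on_subset[OF continuous_on_product_coordinates]) simp

locale metzler_block =
  fixes H :: "'m::finite \<Rightarrow> 'm \<Rightarrow> real" and A :: "'m set" and x :: "'m \<Rightarrow> real"
  assumes symmetric: "H i j = H j i"
    and vanishes_outside: "i \<notin> A \<Longrightarrow> H i j = 0"
    and offdiag_pos: "i \<in> A \<Longrightarrow> j \<in> A \<Longrightarrow> i \<noteq> j \<Longrightarrow> 0 < H i j"
    and x_pos: "0 < x i"
    and Hx_pos: "i \<in> A \<Longrightarrow> 0 < mat_vec H x i"
begin

abbreviation Hx :: "'m \<Rightarrow> real" where "Hx \<equiv> mat_vec H x"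

text \<open>\<open>D x = H x\<close>: the vector \<open>x\<close> is an eigenvector of the pencil \<open>(H, D)\<close> for the eigenvalue 1.\<close>
definition D :: "'m \<Rightarrow> 'm \<Rightarrow> real" where
  "D i j = (if i = j \<and> i \<in> A then Hx i / x i else 0)"

definition restrict_A :: "('m \<Rightarrow> real) \<Rightarrow> 'm \<Rightarrow> real" where
  "restrict_A v i = (if i \<in> A then v i else 0)"

definition D_normalize :: "('m \<Rightarrow> real) \<Rightarrow> 'm \<Rightarrow> real" where
  "D_normalize v = (\<lambda>i. inverse (sqrt (bform D v v)) * restrict_A v i)"

definition D_sphere :: "('m \<Rightarrow> real) set" where
  "D_sphere = {v. (\<forall>i. i \<notin> A \<longrightarrow> v i = 0) \<and> bform H x v = 0 \<and> bform D v v = 1}"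

lemma x_nonzero [simp]: "x i \<noteq> 0"
  using x_pos[of i] by simp

lemma vanishes_outside': "j \<notin> A \<Longrightarrow> H i j = 0"
  using vanishes_outside symmetric by metis

lemma mat_vec_outside: "i \<notin> A \<Longrightarrow> mat_vec H v i = 0"
  by (simp add: mat_vec_def vanishes_outside)

lemma bform_x_left: "bform H x v = (\<Sum>i\<in>A. Hx i * v i)"
proof -
  have "bform H x v = bform H v x" by (rule bform_commute[OF symmetric])
  also have "\<dots> = (\<Sum>i\<in>UNIV. Hx i * v i)" by (simp add: bform_eq_sum_mat_vec mult.commute)
  also have "\<dots> = (\<Sum>i\<in>A. Hx i * v i)"
    by (rule sum.mono_neutral_right) (auto simp: mat_vec_outside)
  finally show ?thesis .
qed

lemma bform_x_scale: "bform H x (\<lambda>i. c * v i) = c * bform H x v"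
  by (simp add: bform_x_left sum_distrib_left mult.left_commute)

lemma D_symmetric: "D i j = D j i"
  by (auto simp: D_def)

lemma bform_D: "bform D a b = (\<Sum>i\<in>A. Hx i / x i * a i * b i)"
proof -
  have "(\<Sum>j\<in>UNIV. a i * D i j * b j) = (if i \<in> A then Hx i / x i * a i * b i else 0)" for i
    by (simp add: D_def if_distrib if_distribR sum.delta cong: if_cong)
  hence "bform D a b = (\<Sum>i\<in>UNIV. if i \<in> A then Hx i / x i * a i * b i else 0)"
    by (simp add: bform_def)
  thus ?thesis by (simp add: sum.If_cases)
qed

lemma mat_vec_D: "mat_vec D v i = (if i \<in> A then Hx i / x i * v i else 0)"
  by (simp add: mat_vec_def D_def if_distrib if_distribR sum.delta cong: if_cong)

lemma D_diag_pos: "i \<in> A \<Longrightarrow> 0 < Hx i / x i"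
  using x_pos Hx_pos by simp

lemma D_term_nonneg: "i \<in> A \<Longrightarrow> 0 \<le> Hx i / x i * v i * v i"
  by (metis D_diag_pos less_imp_le mult.assoc mult_nonneg_nonneg zero_le_square)

lemma bform_D_nonneg: "0 \<le> bform D v v"
  unfolding bform_D by (intro sum_nonneg D_term_nonneg)

lemma bform_D_eq_0_iff: "bform D v v = 0 \<longleftrightarrow> (\<forall>i\<in>A. v i = 0)"
proof -
  have "bform D v v = 0 \<longleftrightarrow> (\<forall>i\<in>A. Hx i / x i * v i * v i = 0)"
    unfolding bform_D by (intro sum_nonneg_eq_0_iff D_term_nonneg) simp_all
  thus ?thesis using Hx_pos by fastforce
qed

lemma restrict_A_outside: "i \<notin> A \<Longrightarrow> restrict_A v i = 0"
  by (simp add: restrict_A_def)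

lemma bform_restrict_A:
  assumes "\<And>i j. i \<notin> A \<or> j \<notin> A \<Longrightarrow> G i j = 0"
  shows "bform G (restrict_A a) (restrict_A b) = bform G a b"
  unfolding bform_def restrict_A_def by (intro sum.cong refl) (auto simp: assms)

lemma bform_H_restrict_A: "bform H (restrict_A a) (restrict_A b) = bform H a b"
  by (rule bform_restrict_A) (auto simp: vanishes_outside vanishes_outside')

lemma bform_D_restrict_A: "bform D (restrict_A a) (restrict_A b) = bform D a b"
  by (rule bform_restrict_A) (auto simp: D_def)

lemma bform_x_restrict_A: "bform H x (restrict_A v) = bform H x v"
  unfolding bform_x_left restrict_A_def by simp

lemma bform_eq_0_if_bform_D_eq_0:
  assumes "bform D v v = 0"
  shows "bform H v v = 0"
proof -
  have "restrict_A v = (\<lambda>_. 0)" using assms by (auto simp: restrict_A_def bform_D_eq_0_iff)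
  thus ?thesis using bform_H_restrict_A[of v v] by (simp add: bform_def)
qed

text \<open>Perron--Frobenius: \<open>x\<close> is a positive eigenvector of the pencil \<open>(H, D)\<close> for the eigenvalue 1,
  so an eigenvector for an eigenvalue \<open>\<mu> \<ge> 1\<close> that is orthogonal to \<open>H x\<close> must vanish on \<open>A\<close>.
  At an index where \<open>v / x\<close> is maximal, \<open>(H v)\<^sub>i = \<mu> (D v)\<^sub>i\<close> and \<open>H\<^sub>i\<^sub>j > 0\<close> force \<open>v / x\<close> to be
  constant on \<open>A\<close>.\<close>
lemma eigenvector_nonpos:
  assumes eigen: "\<And>i. i \<in> A \<Longrightarrow> mat_vec H v i = \<mu> * mat_vec D v i" and "1 \<le> \<mu>"
    and orth: "bform H x v = 0" and "i \<in> A"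
  shows "v i \<le> 0"
proof (rule ccontr)
  assume "\<not> v i \<le> 0"
  define r where "r = (\<lambda>j. v j / x j)"
  define M where "M = Max (r ` A)"
  have "M \<in> r ` A" unfolding M_def using \<open>i \<in> A\<close> by (intro Max_in) auto
  then obtain i0 where i0: "i0 \<in> A" "r i0 = M" by auto
  have le_M: "r j \<le> M" if "j \<in> A" for j unfolding M_def using that by (intro Max_ge) auto
  have "0 < r i" using \<open>\<not> v i \<le> 0\<close> x_pos[of i] by (simp add: r_def)
  hence M_pos: "0 < M" using le_M[OF \<open>i \<in> A\<close>] by linarith
  have terms_nonneg: "0 \<le> H i0 j * x j * (M - r j)" for j
    using offdiag_pos[OF i0(1), of j] vanishes_outside'[of j i0] x_pos[of j] le_M[of j] i0
    by (cases "j \<in> A"; cases "j = i0") auto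
  have "(\<Sum>j\<in>UNIV. H i0 j * x j * (M - r j)) = M * Hx i0 - mat_vec H v i0"
    by (simp add: mat_vec_def r_def algebra_simps sum_subtractf sum_distrib_left)
  also have "mat_vec H v i0 = \<mu> * (M * Hx i0)"
    using eigen[OF i0(1)] i0 by (simp add: mat_vec_D r_def field_simps)
  also have "M * Hx i0 - \<mu> * (M * Hx i0) \<le> 0"
    using \<open>1 \<le> \<mu>\<close> M_pos Hx_pos[OF i0(1)] by (simp add: mult_le_cancel_right1 algebra_simps)
  finally have zero: "\<forall>j\<in>UNIV. H i0 j * x j * (M - r j) = 0"
    using terms_nonneg sum_nonneg_eq_0_iff[of UNIV "\<lambda>j. H i0 j * x j * (M - r j)"]
    by (simp add: order_antisym sum_nonneg)
  have "r j = M" if "j \<in> A" for j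
  proof (cases "j = i0")
    case False
    hence "H i0 j \<noteq> 0" using offdiag_pos[OF i0(1) that] by simp
    thus ?thesis using zero[rule_format, of j] by simp
  qed (use i0 in simp)
  hence "v j = M * x j" if "j \<in> A" for j
    using that by (simp add: r_def field_simps)
  hence "0 < (\<Sum>j\<in>A. Hx j * v j)"
    using \<open>i \<in> A\<close> Hx_pos x_pos M_pos by (intro sum_pos) auto
  thus False using orth by (simp add: bform_x_left)
qed

lemma eigenvector_vanishes:
  assumes "\<And>i. i \<in> A \<Longrightarrow> mat_vec H v i = \<mu> * mat_vec D v i" "1 \<le> \<mu>"
    and "bform H x v = 0" and "i \<in> A"
  shows "v i = 0"
proof -
  have "mat_vec G (\<lambda>j. - v j) i = - mat_vec G v i" for G i
    by (simp add: mat_vec_def sum_negf)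
  moreover have "bform H x (\<lambda>j. - v j) = - bform H x v"
    by (simp add: bform_x_left sum_negf)
  ultimately have "- v i \<le> 0"
    using assms by (intro eigenvector_nonpos[of "\<lambda>j. - v j" \<mu>]) auto
  thus ?thesis using eigenvector_nonpos[OF assms] by simp
qed

lemma D_normalize_in_D_sphere:
  assumes "bform H x v = 0" and "0 < bform D v v"
  shows "D_normalize v \<in> D_sphere"
proof -
  have "(inverse (sqrt (bform D v v)))\<^sup>2 * bform D v v = 1"
    using assms(2) by (simp add: power_inverse)
  thus ?thesis using assms(1)
    by (simp add: D_sphere_def D_normalize_def bform_scale bform_D_restrict_A bform_x_scale
        bform_x_restrict_A restrict_A_outside)
qed

lemma bform_D_normalize:
  "bform H (D_normalize v) (D_normalize v) = bform H v v / bform D v v"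
  using bform_D_nonneg[of v]
  by (simp add: D_normalize_def bform_scale bform_H_restrict_A power_inverse divide_inverse)

lemma compact_D_sphere: "compact D_sphere"
proof -
  define b where "b = sqrt (\<Sum>i\<in>A. x i / Hx i)"
  have "0 \<le> (\<Sum>i\<in>A. x i / Hx i)"
    using x_pos Hx_pos by (intro sum_nonneg) (simp add: less_imp_le)
  have "D_sphere \<subseteq> PiE UNIV (\<lambda>i. {-b..b})"
  proof (intro subsetI PiE_I)
    fix v i assume "v \<in> D_sphere"
    hence v: "\<And>i. i \<notin> A \<Longrightarrow> v i = 0" "bform D v v = 1" by (auto simp: D_sphere_def)
    have "\<bar>v i\<bar> \<le> b"
    proof (cases "i \<in> A")
      case True
      have "Hx i / x i * v i * v i \<le> bform D v v"
        unfolding bform_D using True by (intro member_le_sum D_term_nonneg) auto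
      hence "(v i)\<^sup>2 \<le> x i / Hx i"
        using v(2) D_diag_pos[OF True] x_pos[of i] by (simp add: field_simps power2_eq_square)
      also have "\<dots> \<le> (\<Sum>i\<in>A. x i / Hx i)"
        using True x_pos Hx_pos by (intro member_le_sum) (auto simp: less_imp_le)
      finally have "sqrt ((v i)\<^sup>2) \<le> b" unfolding b_def by (rule real_sqrt_le_mono)
      thus ?thesis by simp
    qed (use v(1) \<open>0 \<le> (\<Sum>i\<in>A. x i / Hx i)\<close> in \<open>simp add: b_def\<close>)
    thus "v i \<in> {-b..b}" by auto
  qed auto
  moreover have "compact (PiE (UNIV::'m set) (\<lambda>i. {-b..b}))"
    using compactin_PiE[of "\<lambda>_. euclidean" UNIV "\<lambda>i. {-b..b}"]
    by (simp add: euclidean_product_topology)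
  moreover have "closed D_sphere"
    unfolding D_sphere_def bform_def
    by (intro closed_Collect_conj closed_Collect_all closed_Collect_imp closed_Collect_eq
          open_Collect_const continuous_intros)
  ultimately show ?thesis by (metis compact_Int_closed inf.absorb_iff2)
qed

lemma exists_rayleigh_maximizer:
  assumes "bform H x v0 = 0" "0 < bform H v0 v0"
  obtains vs where "bform H x vs = 0" "bform D vs vs = 1" "0 < bform H vs vs"
    "\<And>w. bform H x w = 0 \<Longrightarrow> bform H w w \<le> bform H vs vs * bform D w w"
proof -
  have v0: "0 < bform D v0 v0"
    using assms(2) bform_D_nonneg[of v0] bform_eq_0_if_bform_D_eq_0[of v0] by fastforce
  have "continuous_on D_sphere (\<lambda>v. bform H v v)" unfolding bform_def by (intro continuous_intros)
  then obtain vs where "vs \<in> D_sphere" and max: "\<And>v. v \<in> D_sphere \<Longrightarrow> bform H v v \<le> bform H vs vs"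
    using continuous_attains_sup[OF compact_D_sphere] D_normalize_in_D_sphere[OF assms(1) v0] by blast
  have bound: "bform H w w \<le> bform H vs vs * bform D w w" if "bform H x w = 0" for w
  proof (cases "bform D w w = 0")
    case False
    hence "0 < bform D w w" using bform_D_nonneg[of w] by linarith
    thus ?thesis
      using max[OF D_normalize_in_D_sphere[OF that]] by (simp add: bform_D_normalize pos_divide_le_eq)
  qed (simp add: bform_eq_0_if_bform_D_eq_0)
  show thesis
  proof
    show "bform H x vs = 0" "bform D vs vs = 1" using \<open>vs \<in> D_sphere\<close> by (auto simp: D_sphere_def)
    have "0 < bform H v0 v0 / bform D v0 v0" using assms(2) v0 by simp
    also have "\<dots> \<le> bform H vs vs"
      using max[OF D_normalize_in_D_sphere[OF assms(1) v0]] by (simp add: bform_D_normalize)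
    finally show "0 < bform H vs vs" .
  qed (fact bound)
qed

text \<open>Lagrange condition at the maximizer: \<open>G = \<mu> D - H\<close> is positive semidefinite on the
  hyperplane and vanishes at \<open>vs\<close>, hence \<open>G vs\<close> is orthogonal to \<open>h = D\<^sup>-\<^sup>1 G vs\<close>, which lies in the
  hyperplane because \<open>H x = D x\<close>.\<close>
lemma rayleigh_maximizer_eigen:
  assumes orth: "bform H x vs = 0" and unit: "bform D vs vs = 1"
    and max: "\<And>w. bform H x w = 0 \<Longrightarrow> bform H w w \<le> bform H vs vs * bform D w w"
    and "i \<in> A"
  shows "mat_vec H vs i = bform H vs vs * mat_vec D vs i"
proof -
  define \<mu> where "\<mu> = bform H vs vs"
  define G where "G = (\<lambda>i j. \<mu> * D i j - H i j)"
  define q where "q = mat_vec G vs"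
  define h where "h = (\<lambda>i. if i \<in> A then x i / Hx i * q i else 0)"
  have G_sym: "G i j = G j i" for i j by (simp add: G_def D_symmetric symmetric)
  have q_outside: "q i = 0" if "i \<notin> A" for i
    using that by (simp add: q_def G_def mat_vec_diff_mat mat_vec_D mat_vec_outside)
  have "bform H x h = (\<Sum>i\<in>A. x i * q i)"
    unfolding bform_x_left h_def by (intro sum.cong refl) (auto dest: Hx_pos)
  also have "\<dots> = (\<Sum>i\<in>UNIV. x i * q i)"
    by (rule sum.mono_neutral_left) (auto simp: q_outside)
  also have "\<dots> = bform G x vs" by (simp add: q_def bform_eq_sum_mat_vec)
  also have "\<dots> = \<mu> * bform H x vs - bform H x vs"
    by (simp add: G_def bform_diff_mat bform_D bform_x_left mult.commute)
  finally have h_orth: "bform H x h = 0" using orth by simp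
  have "bform G vs h = 0"
  proof (rule bform_orthogonal_if_nonneg_zero[OF G_sym])
    fix t
    have "bform H x (\<lambda>i. vs i + t * h i) = 0"
      using orth h_orth by (simp add: bform_x_left algebra_simps sum.distrib sum_distrib_left[symmetric])
    thus "0 \<le> bform G (\<lambda>i. vs i + t * h i) (\<lambda>i. vs i + t * h i)"
      using max by (simp add: G_def bform_diff_mat \<mu>_def mult.commute)
    show "bform G vs vs = 0" using unit by (simp add: G_def bform_diff_mat \<mu>_def)
  qed
  moreover have "bform G vs h = bform G h vs" by (rule bform_commute[OF G_sym])
  also have "\<dots> = (\<Sum>i\<in>UNIV. h i * q i)" by (simp add: bform_eq_sum_mat_vec q_def)
  also have "\<dots> = (\<Sum>i\<in>A. h i * q i)" by (rule sum.mono_neutral_right) (auto simp: h_def)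
  also have "\<dots> = (\<Sum>i\<in>A. x i / Hx i * (q i)\<^sup>2)" by (simp add: h_def power2_eq_square mult.assoc)
  ultimately have "\<forall>i\<in>A. x i / Hx i * (q i)\<^sup>2 = 0"
    using x_pos Hx_pos by (subst sum_nonneg_eq_0_iff[symmetric]) (auto simp: less_imp_le)
  hence "q i = 0" using \<open>i \<in> A\<close> x_pos[of i] Hx_pos[of i] by auto
  thus ?thesis by (simp add: q_def G_def mat_vec_diff_mat \<mu>_def)
qed

lemma eigenvalue_ge_one:
  assumes le_HDH: "\<And>v. bform H v v \<le> (\<Sum>i\<in>A. x i * (mat_vec H v i)\<^sup>2 / Hx i)"
    and eigen: "\<And>i. i \<in> A \<Longrightarrow> mat_vec H v i = \<mu> * mat_vec D v i"
    and unit: "bform D v v = 1" and "0 < \<mu>" and "bform H v v = \<mu>"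
  shows "1 \<le> \<mu>"
proof -
  have "\<mu> \<le> (\<Sum>i\<in>A. x i * (mat_vec H v i)\<^sup>2 / Hx i)" using le_HDH[of v] \<open>bform H v v = \<mu>\<close> by simp
  also have "\<dots> = (\<Sum>i\<in>A. \<mu>\<^sup>2 * (Hx i / x i * v i * v i))"
    using Hx_pos by (intro sum.cong refl) (simp add: eigen mat_vec_D field_simps power2_eq_square)
  also have "\<dots> = \<mu>\<^sup>2 * bform D v v" by (simp only: bform_D sum_distrib_left)
  finally show ?thesis using \<open>0 < \<mu>\<close> unit by (simp add: power2_eq_square)
qed

text \<open>The hypothesis reads \<open>H \<le> H D\<^sup>-\<^sup>1 H\<close>: every eigenvalue of the pencil \<open>(H, D)\<close> is \<open>\<le> 0\<close> or \<open>\<ge> 1\<close>.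
  By Perron--Frobenius the eigenvalue 1 of \<open>x\<close> is the top one and is simple, so \<open>H\<close> is negative
  semidefinite on the \<open>D\<close>-orthogonal complement of \<open>x\<close>.\<close>
theorem neg_semidef_on_orthogonal:
  assumes le_HDH: "\<And>v. bform H v v \<le> (\<Sum>i\<in>A. x i * (mat_vec H v i)\<^sup>2 / Hx i)"
    and orth: "bform H x w = 0"
  shows "bform H w w \<le> 0"
proof (rule ccontr)
  assume "\<not> bform H w w \<le> 0"
  then obtain vs where vs: "bform H x vs = 0" "bform D vs vs = 1" "0 < bform H vs vs"
    and max: "\<And>w. bform H x w = 0 \<Longrightarrow> bform H w w \<le> bform H vs vs * bform D w w"
    using exists_rayleigh_maximizer[OF orth] by (metis not_le)
  have eigen: "\<And>i. i \<in> A \<Longrightarrow> mat_vec H vs i = bform H vs vs * mat_vec D vs i"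
    using rayleigh_maximizer_eigen[OF vs(1,2) max] .
  have "1 \<le> bform H vs vs" by (rule eigenvalue_ge_one[OF le_HDH eigen vs(2,3) refl])
  hence "\<forall>i\<in>A. vs i = 0" using eigenvector_vanishes[OF eigen _ vs(1)] by blast
  thus False using vs(2) bform_D_eq_0_iff[of vs] by simp
qed

corollary reverse_cauchy_schwarz_if_le_HDH:
  assumes "\<And>v. bform H v v \<le> (\<Sum>i\<in>A. x i * (mat_vec H v i)\<^sup>2 / Hx i)"
    and "0 < bform H x x"
  shows "reverse_cauchy_schwarz H x"
proof (rule reverse_cauchy_schwarzI[OF symmetric assms(2)])
  fix w assume "(\<Sum>i\<in>UNIV. Hx i * w i) = 0"
  hence "bform H x w = 0"
    by (simp add: bform_x_left sum.mono_neutral_left[of UNIV A] mat_vec_outside)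
  thus "bform H w w \<le> 0" by (rule neg_semidef_on_orthogonal[OF assms(1)])
qed

end

section \<open>Polynomials given by coefficient functions\<close>

definition exponent_box :: "('m \<Rightarrow> nat) \<Rightarrow> ('m \<Rightarrow> nat) set" where
  "exponent_box u = {\<alpha>. \<forall>j. \<alpha> j \<le> u j}"

definition monom_val :: "('m::finite \<Rightarrow> nat) \<Rightarrow> ('m \<Rightarrow> real) \<Rightarrow> real" where
  "monom_val \<alpha> x = (\<Prod>j\<in>UNIV. x j ^ \<alpha> j)"

definition supported_in :: "('m \<Rightarrow> nat) \<Rightarrow> 'm mpoly_coeffs \<Rightarrow> bool" where
  "supported_in u p \<longleftrightarrow> (\<forall>\<alpha>. p \<alpha> \<noteq> 0 \<longrightarrow> \<alpha> \<in> exponent_box u)"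

definition homogeneous :: "nat \<Rightarrow> 'm::finite mpoly_coeffs \<Rightarrow> bool" where
  "homogeneous d p \<longleftrightarrow> (\<forall>\<alpha>. p \<alpha> \<noteq> 0 \<longrightarrow> sum \<alpha> UNIV = d)"

definition hessian :: "'m::finite mpoly_coeffs \<Rightarrow> ('m \<Rightarrow> real) \<Rightarrow> 'm \<Rightarrow> 'm \<Rightarrow> real" where
  "hessian p x i j = mpoly_eval (pdiff i (pdiff j p)) x"

lemma finite_exponent_box: "finite (exponent_box (u::'m::finite \<Rightarrow> nat))"
proof (rule finite_subset)
  show "exponent_box u \<subseteq> PiE UNIV (\<lambda>j. {..u j})"
    by (auto simp: exponent_box_def PiE_def extensional_def)
qed (intro finite_PiE; simp)

lemma mpoly_eval_box:
  assumes "supported_in u p"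
  shows "mpoly_eval p x = (\<Sum>\<alpha>\<in>exponent_box u. p \<alpha> * monom_val \<alpha> x)"
  unfolding mpoly_eval_def monom_val_def
  by (rule sum.mono_neutral_left) (use assms finite_exponent_box in \<open>auto simp: supported_in_def\<close>)

lemma mpoly_eval_zero [simp]: "mpoly_eval (\<lambda>_. 0) x = 0"
  by (simp add: mpoly_eval_def)

lemma pdiff_zero [simp]: "pdiff i (\<lambda>_. 0) = (\<lambda>_. 0)"
  by (simp add: pdiff_def)

lemma pdiff_commute: "pdiff i (pdiff j p) = pdiff j (pdiff i p)"
  unfolding pdiff_def by (rule ext) (cases "i = j", auto simp: fun_upd_twist)

lemma fun_upd_Suc_eq_add: "\<alpha>(i := Suc (\<alpha> i)) = (\<lambda>j. \<alpha> j + (if j = i then 1 else 0))"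
  by (rule ext) auto

lemma sum_fun_upd_Suc: "sum (\<alpha>(i := Suc (\<alpha> i))) (UNIV::'m::finite set) = Suc (sum \<alpha> UNIV)"
  unfolding fun_upd_Suc_eq_add by (simp add: sum.distrib)

lemma monom_val_fun_upd_Suc: "monom_val (\<alpha>(i := Suc (\<alpha> i))) x = x i * monom_val \<alpha> x"
proof -
  have "monom_val (\<alpha>(i := Suc (\<alpha> i))) x = (\<Prod>j\<in>UNIV. x j ^ \<alpha> j * (if j = i then x j else 1))"
    unfolding monom_val_def fun_upd_Suc_eq_add by (intro prod.cong refl) (simp add: power_add)
  thus ?thesis unfolding monom_val_def prod.distrib by (simp add: prod.delta)
qed

lemma supported_in_pdiff:
  assumes "supported_in u p"
  shows "supported_in u (pdiff i p)"
  unfolding supported_in_def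
proof (intro allI impI)
  fix \<alpha> assume "pdiff i p \<alpha> \<noteq> 0"
  hence "\<alpha>(i := \<alpha> i + 1) \<in> exponent_box u" using assms by (simp add: pdiff_def supported_in_def)
  moreover have "\<alpha> j \<le> (\<alpha>(i := \<alpha> i + 1)) j" for j by simp
  ultimately show "\<alpha> \<in> exponent_box u" unfolding exponent_box_def using le_trans by blast
qed

lemma homogeneous_pdiff_aux:
  assumes "homogeneous d p" and "pdiff i p \<alpha> \<noteq> 0"
  shows "Suc (sum \<alpha> UNIV) = d"
proof -
  have "p (\<alpha>(i := Suc (\<alpha> i))) \<noteq> 0" using assms(2) by (simp add: pdiff_def)
  thus ?thesis using assms(1) sum_fun_upd_Suc[of \<alpha> i] unfolding homogeneous_def by metis
qed

lemma homogeneous_pdiff: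
  assumes "homogeneous d p"
  shows "homogeneous (d - 1) (pdiff i p)"
  using homogeneous_pdiff_aux[OF assms] by (fastforce simp: homogeneous_def)

lemma pdiff_homogeneous_0:
  assumes "homogeneous 0 p"
  shows "pdiff i p = (\<lambda>_. 0)"
  using homogeneous_pdiff_aux[OF assms] by fastforce

text \<open>Reindexing \<open>\<alpha> \<mapsto> \<alpha> + e\<^sub>i\<close> turns \<open>x\<^sub>i \<partial>\<^sub>i p\<close> into \<open>\<Sum>\<^sub>\<alpha> \<alpha>\<^sub>i p\<^sub>\<alpha> x\<^sup>\<alpha>\<close>; the exponents
  that are not of this form have \<open>\<alpha>\<^sub>i = 0\<close>.\<close>
lemma x_times_pdiff_eval:
  assumes "supported_in u p"
  shows "x i * mpoly_eval (pdiff i p) x = (\<Sum>\<alpha>\<in>exponent_box u. real (\<alpha> i) * p \<alpha> * monom_val \<alpha> x)"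
proof -
  define \<sigma> where "\<sigma> = (\<lambda>\<alpha>::'a \<Rightarrow> nat. \<alpha>(i := Suc (\<alpha> i)))"
  define g where "g = (\<lambda>\<beta>. real (\<beta> i) * p \<beta> * monom_val \<beta> x)"
  have "inj \<sigma>"
  proof (rule injI, rule ext)
    fix a b j assume "\<sigma> a = \<sigma> b"
    hence "\<sigma> a j = \<sigma> b j" by simp
    thus "a j = b j" by (cases "j = i") (simp_all add: \<sigma>_def)
  qed
  have "x i * mpoly_eval (pdiff i p) x = (\<Sum>\<alpha>\<in>exponent_box u. g (\<sigma> \<alpha>))"
    unfolding mpoly_eval_box[OF supported_in_pdiff[OF assms]] sum_distrib_left
    by (intro sum.cong refl) (simp add: g_def \<sigma>_def pdiff_def monom_val_fun_upd_Suc)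
  also have "\<dots> = (\<Sum>\<beta>\<in>\<sigma> ` exponent_box u. g \<beta>)"
    using \<open>inj \<sigma>\<close> by (simp add: sum.reindex inj_on_subset comp_def)
  also have "\<dots> = (\<Sum>\<beta>\<in>exponent_box u. g \<beta>)"
  proof (rule sum.mono_neutral_cong)
    show "g \<beta> = 0" if "\<beta> \<in> \<sigma> ` exponent_box u - exponent_box u" for \<beta>
      using that assms by (auto simp: g_def supported_in_def)
    show "g \<beta> = 0" if "\<beta> \<in> exponent_box u - \<sigma> ` exponent_box u" for \<beta>
    proof (cases "\<beta> i = 0")
      case False
      hence "\<beta> = \<sigma> (\<beta>(i := \<beta> i - 1))" by (auto simp: \<sigma>_def)
      moreover have "\<beta>(i := \<beta> i - 1) \<in> exponent_box u"
        using that by (auto simp: exponent_box_def intro: le_trans[OF diff_le_self])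
      ultimately show ?thesis using that by blast
    qed (simp add: g_def)
  qed (use finite_exponent_box in auto)
  finally show ?thesis unfolding g_def .
qed

lemma euler_identity:
  assumes "supported_in u p" and "homogeneous d p"
  shows "(\<Sum>i\<in>UNIV. x i * mpoly_eval (pdiff i p) x) = real d * mpoly_eval p x"
proof -
  have "(\<Sum>i\<in>UNIV. x i * mpoly_eval (pdiff i p) x)
      = (\<Sum>\<alpha>\<in>exponent_box u. real (sum \<alpha> UNIV) * (p \<alpha> * monom_val \<alpha> x))"
    unfolding x_times_pdiff_eval[OF assms(1)]
    by (subst sum.swap) (simp add: sum_distrib_right mult.assoc)
  also have "\<dots> = (\<Sum>\<alpha>\<in>exponent_box u. real d * (p \<alpha> * monom_val \<alpha> x))"
    using assms(2) unfolding homogeneous_def by (intro sum.cong refl) (metis mult_eq_0_iff)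
  also have "\<dots> = real d * mpoly_eval p x"
    by (simp add: mpoly_eval_box[OF assms(1)] sum_distrib_left mult.assoc)
  finally show ?thesis .
qed

lemma hessian_symmetric: "hessian p x i j = hessian p x j i"
  by (simp add: hessian_def pdiff_commute)

context
  fixes p :: "'m::finite mpoly_coeffs" and u d
  assumes supp: "supported_in u p" and homog: "homogeneous d p"
begin

lemma mat_vec_hessian_x: "mat_vec (hessian p x) x i = real (d - 1) * mpoly_eval (pdiff i p) x"
  unfolding mat_vec_def hessian_def pdiff_commute[of i]
  using euler_identity[OF supported_in_pdiff[OF supp] homogeneous_pdiff[OF homog]]
  by (simp add: mult.commute)

lemma bform_hessian_x_left:
  "bform (hessian p x) x v = real (d - 1) * (\<Sum>k\<in>UNIV. mpoly_eval (pdiff k p) x * v k)"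
  by (simp add: bform_commute[OF hessian_symmetric] bform_eq_sum_mat_vec mat_vec_hessian_x
      sum_distrib_left mult_ac)

lemma bform_hessian_x_x: "bform (hessian p x) x x = real (d - 1) * real d * mpoly_eval p x"
  using euler_identity[OF supp homog]
  by (simp add: bform_hessian_x_left mult.commute mult.left_commute)

end

lemma bform_hessian_pdiff_x_left:
  assumes "supported_in u p" and "homogeneous d p"
  shows "bform (hessian (pdiff i p) x) x v = real (d - 2) * mat_vec (hessian p x) v i"
  unfolding bform_hessian_x_left[OF supported_in_pdiff[OF assms(1)] homogeneous_pdiff[OF assms(2)]]
  by (simp add: mat_vec_def hessian_def pdiff_commute[of _ i] sum_distrib_left mult_ac numeral_2_eq_2)

lemma sum_x_bform_hessian_pdiff:
  assumes "supported_in u p" and "homogeneous d p"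
  shows "(\<Sum>i\<in>UNIV. x i * bform (hessian (pdiff i p) x) v v) = real (d - 2) * bform (hessian p x) v v"
proof -
  have euler: "(\<Sum>i\<in>UNIV. x i * mpoly_eval (pdiff j (pdiff k (pdiff i p))) x)
      = real (d - 2) * hessian p x j k" for j k
  proof -
    have "pdiff j (pdiff k (pdiff i p)) = pdiff i (pdiff j (pdiff k p))" for i
      by (metis pdiff_commute)
    thus ?thesis
      using euler_identity[OF supported_in_pdiff[OF supported_in_pdiff[OF assms(1)]]
          homogeneous_pdiff[OF homogeneous_pdiff[OF assms(2)]]]
      by (simp add: hessian_def numeral_2_eq_2)
  qed
  have "(\<Sum>i\<in>UNIV. x i * bform (hessian (pdiff i p) x) v v)
      = (\<Sum>j\<in>UNIV. \<Sum>k\<in>UNIV. v j * (\<Sum>i\<in>UNIV. x i * mpoly_eval (pdiff j (pdiff k (pdiff i p))) x) * v k)"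
    unfolding bform_def hessian_def sum_distrib_left sum_distrib_right
    by (subst sum.swap, subst (2) sum.swap) (simp add: mult_ac)
  also have "\<dots> = real (d - 2) * bform (hessian p x) v v"
    unfolding euler bform_def by (simp add: sum_distrib_left mult_ac)
  finally show ?thesis .
qed

lemma bform_hess_log:
  "bform (hess_log p x) v v = (mpoly_eval p x * bform (hessian p x) v v
     - (\<Sum>i\<in>UNIV. mpoly_eval (pdiff i p) x * v i)\<^sup>2) / (mpoly_eval p x)\<^sup>2"
proof -
  define P where "P = mpoly_eval p x"
  have "bform (hess_log p x) v v
      = (\<Sum>i\<in>UNIV. \<Sum>j\<in>UNIV. (P * (v i * hessian p x i j * v j)
          - (mpoly_eval (pdiff i p) x * v i) * (mpoly_eval (pdiff j p) x * v j)) / P\<^sup>2)"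
    unfolding bform_def hess_log_def P_def hessian_def by (intro sum.cong refl) (simp add: field_simps)
  thus ?thesis unfolding P_def bform_def
    by (simp add: sum_divide_distrib[symmetric] sum_subtractf sum_distrib_left[symmetric]
        sum_product power2_eq_square)
qed

text \<open>By Euler's identity \<open>x\<^sup>T H x = d (d - 1) p\<close> and \<open>x\<^sup>T H v = (d - 1) \<nabla>p \<cdot> v\<close>, so the
  reverse Cauchy--Schwarz inequality gives \<open>p v\<^sup>T H v \<le> (d - 1)/d (\<nabla>p \<cdot> v)\<^sup>2\<close>.\<close>
lemma neg_semidef_hess_log_if_reverse_cauchy_schwarz:
  assumes supp: "supported_in u p" and homog: "homogeneous d p" and pos: "0 < mpoly_eval p x"
    and rcs: "2 \<le> d \<Longrightarrow> reverse_cauchy_schwarz (hessian p x) x"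
  shows "neg_semidef (hess_log p x)"
  unfolding neg_semidef_def
proof
  fix v :: "'a \<Rightarrow> real"
  define P where "P = mpoly_eval p x"
  define s where "s = (\<Sum>i\<in>UNIV. mpoly_eval (pdiff i p) x * v i)"
  define Q where "Q = bform (hessian p x) v v"
  have "P * Q \<le> s\<^sup>2"
  proof (cases "2 \<le> d")
    case False
    hence "pdiff i (pdiff j p) = (\<lambda>_. 0)" for i j
      using homogeneous_pdiff[OF homog, of j] by (intro pdiff_homogeneous_0) simp
    thus ?thesis by (simp add: Q_def bform_def hessian_def)
  next
    case True
    define e where "e = real (d - 1)"
    have d_eq: "real d = e + 1" and "1 \<le> e" using True by (simp_all add: e_def of_nat_diff)
    have "Q * (e * real d * P) \<le> (e * s)\<^sup>2"
      using rcs[OF True] unfolding reverse_cauchy_schwarz_def Q_def P_def s_def e_def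
        bform_hessian_x_x[OF supp homog] bform_hessian_x_left[OF supp homog] by blast
    hence "e * ((e + 1) * (P * Q)) \<le> e * (e * s\<^sup>2)"
      by (simp add: d_eq power2_eq_square algebra_simps)
    hence "(e + 1) * (P * Q) \<le> e * s\<^sup>2"
      using \<open>1 \<le> e\<close> by (subst (asm) mult_le_cancel_left_pos) auto
    also have "\<dots> \<le> (e + 1) * s\<^sup>2" by (intro mult_right_mono) auto
    finally show ?thesis using \<open>1 \<le> e\<close> by simp
  qed
  thus "(\<Sum>i\<in>UNIV. \<Sum>j\<in>UNIV. v i * hess_log p x i j * v j) \<le> 0"
    using bform_hess_log[of p x v] pos
    by (simp add: bform_def P_def Q_def s_def divide_nonpos_pos)
qed

lemma bform_hessian_pdiff_le:
  assumes supp: "supported_in u p" and homog: "homogeneous d p" and "3 \<le> d"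
    and rcs: "reverse_cauchy_schwarz (hessian (pdiff i p) x) x"
    and pos: "0 < mat_vec (hessian p x) x i"
  shows "bform (hessian (pdiff i p) x) v v
    \<le> real (d - 2) * (mat_vec (hessian p x) v i)\<^sup>2 / mat_vec (hessian p x) x i"
proof -
  define k where "k = real (d - 2)"
  have "0 < k" using \<open>3 \<le> d\<close> by (simp add: k_def)
  have "bform (hessian (pdiff i p) x) v v * (k * mat_vec (hessian p x) x i)
      \<le> (k * mat_vec (hessian p x) v i)\<^sup>2"
    using rcs unfolding reverse_cauchy_schwarz_def k_def bform_hessian_pdiff_x_left[OF supp homog]
    by blast
  hence "k * (bform (hessian (pdiff i p) x) v v * mat_vec (hessian p x) x i)
      \<le> k * (k * (mat_vec (hessian p x) v i)\<^sup>2)"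
    by (simp add: power2_eq_square algebra_simps)
  hence "bform (hessian (pdiff i p) x) v v * mat_vec (hessian p x) x i
      \<le> k * (mat_vec (hessian p x) v i)\<^sup>2"
    using \<open>0 < k\<close> by simp
  thus ?thesis using pos by (simp add: pos_le_divide_eq k_def)
qed

text \<open>The inductive step: Euler's identity for the third derivatives turns the reverse
  Cauchy--Schwarz inequalities of the partials into \<open>H \<le> H D\<^sup>-\<^sup>1 H\<close>.\<close>
lemma reverse_cauchy_schwarz_if_partials:
  assumes supp: "supported_in u p" and homog: "homogeneous d p" and "3 \<le> d"
    and pos: "0 < mpoly_eval p x"
    and metzler: "metzler_block (hessian p x) A x"
    and outside: "\<And>i. i \<notin> A \<Longrightarrow> pdiff i p = (\<lambda>_. 0)"
    and partials: "\<And>i. i \<in> A \<Longrightarrow> reverse_cauchy_schwarz (hessian (pdiff i p) x) x"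
  shows "reverse_cauchy_schwarz (hessian p x) x"
proof -
  interpret metzler_block "hessian p x" A x by (fact metzler)
  let ?H = "hessian p x"
  define k where "k = real (d - 2)"
  have "0 < k" using \<open>3 \<le> d\<close> by (simp add: k_def)
  have "bform ?H v v \<le> (\<Sum>i\<in>A. x i * (mat_vec ?H v i)\<^sup>2 / Hx i)" for v
  proof -
    have "k * bform ?H v v = (\<Sum>i\<in>UNIV. x i * bform (hessian (pdiff i p) x) v v)"
      unfolding k_def by (rule sum_x_bform_hessian_pdiff[OF supp homog, symmetric])
    also have "\<dots> = (\<Sum>i\<in>A. x i * bform (hessian (pdiff i p) x) v v)"
      by (rule sum.mono_neutral_right) (auto simp: outside hessian_def bform_def)
    also have "\<dots> \<le> (\<Sum>i\<in>A. x i * (k * (mat_vec ?H v i)\<^sup>2 / Hx i))"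
      using bform_hessian_pdiff_le[OF supp homog \<open>3 \<le> d\<close> partials Hx_pos] x_pos
      by (intro sum_mono mult_left_mono) (simp_all add: k_def less_imp_le)
    also have "\<dots> = k * (\<Sum>i\<in>A. x i * (mat_vec ?H v i)\<^sup>2 / Hx i)"
      by (simp add: sum_distrib_left mult_ac)
    finally show ?thesis using \<open>0 < k\<close> by simp
  qed
  moreover have "0 < bform ?H x x"
    using pos \<open>3 \<le> d\<close> by (simp add: bform_hessian_x_x[OF supp homog])
  ultimately show ?thesis by (rule reverse_cauchy_schwarz_if_le_HDH)
qed

section \<open>Generating polynomials with log-concave weights\<close>

definition gen_poly :: "real \<Rightarrow> nat \<Rightarrow> ('m::finite \<Rightarrow> nat) \<Rightarrow> ('m \<Rightarrow> nat \<Rightarrow> real) \<Rightarrow> 'm mpoly_coeffs" where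
  "gen_poly C d u w = (\<lambda>\<alpha>. if (\<forall>e. \<alpha> e \<le> u e) \<and> sum \<alpha> UNIV = d
     then C * (\<Prod>e\<in>UNIV. w e (\<alpha> e) / fact (\<alpha> e)) else 0)"

definition log_concave_weights :: "('m \<Rightarrow> nat \<Rightarrow> real) \<Rightarrow> bool" where
  "log_concave_weights w \<longleftrightarrow> (\<forall>e j. 0 < w e j) \<and> (\<forall>e j. w e j * w e (j + 2) \<le> (w e (j + 1))\<^sup>2)"

definition shift_weight :: "'m \<Rightarrow> ('m \<Rightarrow> nat \<Rightarrow> real) \<Rightarrow> 'm \<Rightarrow> nat \<Rightarrow> real" where
  "shift_weight i w = w(i := (\<lambda>j. w i (Suc j)))"

lemma supported_in_gen_poly: "supported_in u (gen_poly C d u w)"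
  by (simp add: supported_in_def exponent_box_def gen_poly_def)

lemma homogeneous_gen_poly: "homogeneous d (gen_poly C d u w)"
  by (simp add: homogeneous_def gen_poly_def)

lemma log_concave_weights_shift_weight:
  "log_concave_weights w \<Longrightarrow> log_concave_weights (shift_weight i w)"
  by (auto simp: log_concave_weights_def shift_weight_def numeral_2_eq_2)

lemma log_concave_weights_shift:
  "log_concave_weights w \<Longrightarrow> log_concave_weights (\<lambda>e j. w e (j + \<beta> e))"
  by (auto simp: log_concave_weights_def add.commute add.left_commute)

lemma gen_poly_term_pos:
  "0 < C \<Longrightarrow> log_concave_weights w \<Longrightarrow> 0 < C * (\<Prod>e\<in>UNIV. w e (\<alpha> e) / fact (\<alpha> e))"
  by (auto simp: log_concave_weights_def intro!: mult_pos_pos prod_pos divide_pos_pos)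

lemma sum_fun_upd_pred:
  fixes u :: "'m::finite \<Rightarrow> nat"
  assumes "1 \<le> u i"
  shows "sum (u(i := u i - 1)) UNIV = sum u UNIV - 1"
proof -
  have "(u(i := u i - 1))(i := Suc ((u(i := u i - 1)) i)) = u" using assms by (auto simp: fun_eq_iff)
  thus ?thesis using sum_fun_upd_Suc[of "u(i := u i - 1)" i] by simp
qed

lemma pdiff_gen_poly:
  fixes u :: "'m::finite \<Rightarrow> nat"
  assumes "1 \<le> u i" "1 \<le> d"
  shows "pdiff i (gen_poly C d u w) = gen_poly C (d - 1) (u(i := u i - 1)) (shift_weight i w)"
proof
  fix \<alpha> :: "'m \<Rightarrow> nat"
  define \<alpha>' where "\<alpha>' = \<alpha>(i := Suc (\<alpha> i))"
  have box: "(\<forall>e. \<alpha>' e \<le> u e) \<longleftrightarrow> (\<forall>e. \<alpha> e \<le> (u(i := u i - 1)) e)"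
    unfolding \<alpha>'_def using assms(1) by (auto simp: fun_upd_apply)
  have degree: "sum \<alpha>' UNIV = d \<longleftrightarrow> sum \<alpha> UNIV = d - 1"
    unfolding \<alpha>'_def sum_fun_upd_Suc using assms(2) by auto
  have "real (\<alpha> i) + 1 \<noteq> 0" by (simp add: add_nonneg_pos)
  hence factor_i: "real (\<alpha> i + 1) * (w i (\<alpha>' i) / fact (\<alpha>' i)) = shift_weight i w i (\<alpha> i) / fact (\<alpha> i)"
    by (simp add: \<alpha>'_def shift_weight_def)
  have rest: "(\<Prod>e\<in>UNIV - {i}. w e (\<alpha>' e) / fact (\<alpha>' e))
      = (\<Prod>e\<in>UNIV - {i}. shift_weight i w e (\<alpha> e) / fact (\<alpha> e))"
    by (intro prod.cong refl) (auto simp: \<alpha>'_def shift_weight_def)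
  have "real (\<alpha> i + 1) * (\<Prod>e\<in>UNIV. w e (\<alpha>' e) / fact (\<alpha>' e))
      = (\<Prod>e\<in>UNIV. shift_weight i w e (\<alpha> e) / fact (\<alpha> e))"
    unfolding prod.remove[OF finite UNIV_I, of _ i] factor_i[symmetric] rest by (simp only: mult.assoc)
  thus "pdiff i (gen_poly C d u w) \<alpha> = gen_poly C (d - 1) (u(i := u i - 1)) (shift_weight i w) \<alpha>"
    using box degree unfolding pdiff_def gen_poly_def \<alpha>'_def[symmetric] Suc_eq_plus1[symmetric]
    by (simp add: mult.left_commute)
qed

lemma pdiff_gen_poly_eq_0:
  "u i = 0 \<Longrightarrow> pdiff i (gen_poly C d u w) = (\<lambda>_. 0)"
  by (auto simp: pdiff_def gen_poly_def intro!: ext)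

lemma exists_exponent_in_box:
  fixes u :: "'m::finite \<Rightarrow> nat"
  shows "d \<le> sum u UNIV \<Longrightarrow> \<exists>\<alpha>. (\<forall>j. \<alpha> j \<le> u j) \<and> sum \<alpha> UNIV = d"
proof (induction d)
  case 0 thus ?case by (intro exI[of _ "\<lambda>_. 0"]) auto
next
  case (Suc d)
  then obtain \<alpha> where \<alpha>: "\<forall>j. \<alpha> j \<le> u j" "sum \<alpha> UNIV = d" by auto
  have "\<alpha> \<noteq> u" using \<alpha>(2) Suc.prems by auto
  then obtain j where "\<alpha> j < u j" using \<alpha>(1) by (metis ext le_neq_implies_less)
  hence "\<forall>k. (\<alpha>(j := Suc (\<alpha> j))) k \<le> u k" using \<alpha>(1) by auto
  thus ?case using \<alpha>(2) sum_fun_upd_Suc[of \<alpha> j] by blast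
qed

lemma gen_poly_eq_0:
  fixes u :: "'m::finite \<Rightarrow> nat"
  assumes "sum u UNIV < d"
  shows "gen_poly C d u w = (\<lambda>_. 0)"
proof
  fix \<alpha> :: "'m \<Rightarrow> nat"
  have "sum \<alpha> UNIV \<le> sum u UNIV" if "\<forall>e. \<alpha> e \<le> u e"
    using that by (intro sum_mono) auto
  thus "gen_poly C d u w \<alpha> = 0" using assms by (auto simp: gen_poly_def)
qed

lemma monom_val_pos: "(\<And>j. 0 < x j) \<Longrightarrow> 0 < monom_val \<alpha> x"
  unfolding monom_val_def by (auto intro!: prod_pos)

lemma mpoly_eval_gen_poly_pos:
  fixes u :: "'m::finite \<Rightarrow> nat"
  assumes "0 < C" "log_concave_weights w" and "d \<le> sum u UNIV" and x: "\<And>j. 0 < x j"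
  shows "0 < mpoly_eval (gen_poly C d u w) x"
proof -
  obtain \<alpha> where \<alpha>: "\<forall>j. \<alpha> j \<le> u j" "sum \<alpha> UNIV = d" using exists_exponent_in_box[OF assms(3)] by auto
  have terms: "0 \<le> gen_poly C d u w \<beta> * monom_val \<beta> x" for \<beta>
    using gen_poly_term_pos[OF assms(1,2)] monom_val_pos[of x, OF x]
    by (simp add: gen_poly_def less_imp_le)
  have "0 < (\<Sum>\<beta>\<in>exponent_box u. gen_poly C d u w \<beta> * monom_val \<beta> x)"
  proof (rule sum_pos2[OF finite_exponent_box])
    show "\<alpha> \<in> exponent_box u" using \<alpha> by (simp add: exponent_box_def)
    show "0 < gen_poly C d u w \<alpha> * monom_val \<alpha> x"
      using \<alpha> gen_poly_term_pos[OF assms(1,2)] monom_val_pos[of x, OF x] by (simp add: gen_poly_def)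
  qed (use terms in auto)
  thus ?thesis by (simp add: mpoly_eval_box[OF supported_in_gen_poly])
qed

lemma mpoly_eval_gen_poly_degree_0: "mpoly_eval (gen_poly C 0 u w) x = C * (\<Prod>e\<in>UNIV. w e 0)"
proof -
  have "supported_in (\<lambda>_. 0) (gen_poly C 0 u w)"
    by (auto simp: supported_in_def exponent_box_def gen_poly_def)
  moreover have "exponent_box (\<lambda>_::'a. 0::nat) = {\<lambda>_. 0}" by (auto simp: exponent_box_def)
  ultimately show ?thesis by (simp add: mpoly_eval_box gen_poly_def monom_val_def)
qed

lemma prod_eq_prod_times_ratio:
  fixes f g :: "'m::finite \<Rightarrow> real"
  assumes "\<And>e. e \<notin> S \<Longrightarrow> f e = g e" and "\<And>e. g e \<noteq> 0"
  shows "(\<Prod>e\<in>UNIV. f e) = (\<Prod>e\<in>UNIV. g e) * (\<Prod>e\<in>S. f e / g e)"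
proof -
  have "(\<Prod>e\<in>UNIV. f e) = (\<Prod>e\<in>UNIV. g e * (if e \<in> S then f e / g e else 1))"
    by (intro prod.cong refl) (use assms in auto)
  also have "\<dots> = (\<Prod>e\<in>UNIV. g e) * (\<Prod>e\<in>S. f e / g e)"
    by (simp add: prod.distrib prod.If_cases Int_absorb1)
  finally show ?thesis .
qed

text \<open>In degree two the Hessian is constant: \<open>\<kappa> (\<sigma> \<sigma>\<^sup>T - diag \<Lambda>)\<close>, and log-concavity of the
  weights is exactly \<open>\<Lambda> \<ge> 0\<close>.\<close>
lemma hessian_gen_poly_degree_2:
  fixes u :: "'m::finite \<Rightarrow> nat"
  assumes "log_concave_weights w"
  defines "\<sigma> \<equiv> (\<lambda>i. if 1 \<le> u i then w i 1 / w i 0 else 0)"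
    and "\<Lambda> \<equiv> (\<lambda>i. (if 1 \<le> u i then w i 1 / w i 0 else 0)\<^sup>2 - (if 2 \<le> u i then w i 2 / w i 0 else 0))"
  shows "hessian (gen_poly C 2 u w) x i j
    = C * (\<Prod>e\<in>UNIV. w e 0) * (\<sigma> i * \<sigma> j - (if i = j then \<Lambda> i else 0))"
proof -
  have w_nonzero: "w e k \<noteq> 0" for e k
    using assms(1) by (metis log_concave_weights_def less_irrefl)
  show ?thesis
  proof (cases "u j = 0")
    case True
    thus ?thesis by (simp add: hessian_def pdiff_gen_poly_eq_0 \<sigma>_def \<Lambda>_def)
  next
    case False
    define u1 where "u1 = u(j := u j - 1)"
    have pdiff_j: "pdiff j (gen_poly C 2 u w) = gen_poly C 1 u1 (shift_weight j w)"
      using pdiff_gen_poly[of u j 2] False by (simp add: u1_def)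
    show ?thesis
    proof (cases "u1 i = 0")
      case True
      hence "u i = 0 \<and> i \<noteq> j \<or> u j = 1 \<and> i = j" using False by (auto simp: u1_def split: if_splits)
      thus ?thesis using True
        by (auto simp: hessian_def pdiff_j pdiff_gen_poly_eq_0 \<sigma>_def \<Lambda>_def power2_eq_square)
    next
      case False
      have "hessian (gen_poly C 2 u w) x i j = C * (\<Prod>e\<in>UNIV. shift_weight i (shift_weight j w) e 0)"
        using pdiff_gen_poly[of u1 i 1] False
        by (simp add: hessian_def pdiff_j mpoly_eval_gen_poly_degree_0)
      also have "\<dots> = C * ((\<Prod>e\<in>UNIV. w e 0)
          * (\<Prod>e\<in>{i, j}. shift_weight i (shift_weight j w) e 0 / w e 0))"
        by (subst prod_eq_prod_times_ratio[of "{i, j}"]) (auto simp: shift_weight_def w_nonzero)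
      finally show ?thesis
        using False \<open>u j \<noteq> 0\<close>
        by (cases "i = j") (auto simp: u1_def \<sigma>_def \<Lambda>_def shift_weight_def numeral_2_eq_2
            power2_eq_square split: if_splits)
    qed
  qed
qed

lemma reverse_cauchy_schwarz_gen_poly_degree_2:
  fixes u :: "'m::finite \<Rightarrow> nat"
  assumes "0 < C" and lc: "log_concave_weights w" and "2 \<le> sum u UNIV" and "\<And>j. 0 < x j"
  shows "reverse_cauchy_schwarz (hessian (gen_poly C 2 u w) x) x"
proof (rule reverse_cauchy_schwarzI[OF hessian_symmetric])
  let ?H = "hessian (gen_poly C 2 u w) x"
  define \<kappa> where "\<kappa> = C * (\<Prod>e\<in>UNIV. w e 0)"
  define \<sigma> where "\<sigma> = (\<lambda>i. if 1 \<le> u i then w i 1 / w i 0 else 0)"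
  define \<Lambda> where "\<Lambda> = (\<lambda>i. (if 1 \<le> u i then w i 1 / w i 0 else 0)\<^sup>2 - (if 2 \<le> u i then w i 2 / w i 0 else 0))"
  have w_pos: "0 < w e k" for e k using lc by (simp add: log_concave_weights_def)
  have "0 < \<kappa>" using \<open>0 < C\<close> w_pos by (simp add: \<kappa>_def prod_pos)
  have "0 \<le> \<Lambda> i" for i
  proof -
    have "w i 0 * w i 2 \<le> (w i 1)\<^sup>2" using lc unfolding log_concave_weights_def by (metis add_0)
    hence "w i 2 / w i 0 \<le> (w i 1 / w i 0)\<^sup>2"
      using w_pos[of i 0] by (simp add: power_divide field_simps power2_eq_square)
    thus ?thesis by (simp add: \<Lambda>_def)
  qed
  have form: "bform ?H a b = \<kappa> * ((\<Sum>i\<in>UNIV. \<sigma> i * a i) * (\<Sum>j\<in>UNIV. \<sigma> j * b j) - (\<Sum>i\<in>UNIV. \<Lambda> i * a i * b i))"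
    for a b
    by (rule bform_rank_one_minus_diag)
      (simp add: hessian_gen_poly_degree_2[OF lc] \<kappa>_def \<sigma>_def \<Lambda>_def)
  show "bform ?H v v \<le> 0" if "(\<Sum>i\<in>UNIV. \<sigma> i * v i) = 0" for v
    using that \<open>0 < \<kappa>\<close> \<open>\<And>i. 0 \<le> \<Lambda> i\<close>
    by (simp add: form mult_le_0_iff mult.assoc sum_nonneg)
  show "0 < bform ?H x x"
    using mpoly_eval_gen_poly_pos[OF assms]
    by (simp add: bform_hessian_x_x[OF supported_in_gen_poly homogeneous_gen_poly])
qed

lemma metzler_block_hessian_gen_poly:
  fixes u :: "'m::finite \<Rightarrow> nat"
  assumes C: "0 < C" and lc: "log_concave_weights w" and "2 \<le> d" and "d \<le> sum u UNIV"
    and x: "\<And>j. 0 < x j"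
  shows "metzler_block (hessian (gen_poly C d u w) x) {i. 1 \<le> u i} x"
proof
  let ?p = "gen_poly C d u w"
  have pdiff_i: "pdiff i ?p = gen_poly C (d - 1) (u(i := u i - 1)) (shift_weight i w)"
    if "1 \<le> u i" for i
    using that \<open>2 \<le> d\<close> by (intro pdiff_gen_poly) auto
  show "hessian ?p x i j = hessian ?p x j i" for i j by (rule hessian_symmetric)
  show "hessian ?p x i j = 0" if "i \<notin> {i. 1 \<le> u i}" for i j
    using that by (simp add: hessian_def pdiff_commute[of i] pdiff_gen_poly_eq_0)
  show "0 < hessian ?p x i j" if "i \<in> {i. 1 \<le> u i}" "j \<in> {i. 1 \<le> u i}" "i \<noteq> j" for i j
  proof -
    define u1 where "u1 = u(j := u j - 1)"
    have "1 \<le> u1 i" using that by (simp add: u1_def)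
    moreover have "d - 1 - 1 \<le> sum (u1(i := u1 i - 1)) UNIV"
      using that \<open>d \<le> sum u UNIV\<close> sum_fun_upd_pred[of u j] sum_fun_upd_pred[of u1 i, OF \<open>1 \<le> u1 i\<close>]
      by (simp add: u1_def)
    ultimately show ?thesis
      using that \<open>2 \<le> d\<close> pdiff_gen_poly[of u1 i "d - 1"]
      by (simp add: hessian_def pdiff_i u1_def mpoly_eval_gen_poly_pos C lc
          log_concave_weights_shift_weight x)
  qed
  show "0 < x i" for i by (rule x)
  show "0 < mat_vec (hessian ?p x) x i" if "i \<in> {i. 1 \<le> u i}" for i
  proof -
    have "d - 1 \<le> sum (u(i := u i - 1)) UNIV"
      using that \<open>d \<le> sum u UNIV\<close> sum_fun_upd_pred[of u i] by simp
    hence "0 < mpoly_eval (pdiff i ?p) x"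
      using that by (simp add: pdiff_i mpoly_eval_gen_poly_pos C lc log_concave_weights_shift_weight x)
    thus ?thesis using \<open>2 \<le> d\<close>
      by (simp add: mat_vec_hessian_x[OF supported_in_gen_poly homogeneous_gen_poly])
  qed
qed

lemma reverse_cauchy_schwarz_gen_poly:
  fixes u :: "'m::finite \<Rightarrow> nat"
  assumes "2 \<le> d"
  shows "0 < C \<Longrightarrow> log_concave_weights w \<Longrightarrow> d \<le> sum u UNIV \<Longrightarrow> (\<And>j. 0 < x j)
    \<Longrightarrow> reverse_cauchy_schwarz (hessian (gen_poly C d u w) x) x"
  using assms
proof (induction d arbitrary: u w rule: nat_induct_at_least)
  case base
  thus ?case by (rule reverse_cauchy_schwarz_gen_poly_degree_2)
next
  case (Suc d)
  note C = \<open>0 < C\<close> and lc = \<open>log_concave_weights w\<close> and x = \<open>\<And>j. 0 < x j\<close>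
  let ?p = "gen_poly C (Suc d) u w"
  have partials: "reverse_cauchy_schwarz (hessian (pdiff i ?p) x) x" if "1 \<le> u i" for i
  proof -
    have degree: "d \<le> sum (u(i := u i - 1)) UNIV"
      using that Suc.prems(3) sum_fun_upd_pred[of u i] by simp
    have pdiff_i: "pdiff i ?p = gen_poly C d (u(i := u i - 1)) (shift_weight i w)"
      using that by (subst pdiff_gen_poly) auto
    show ?thesis
      unfolding pdiff_i by (rule Suc.IH[OF C log_concave_weights_shift_weight[OF lc] degree x])
  qed
  have "3 \<le> Suc d" using Suc.hyps by simp
  from reverse_cauchy_schwarz_if_partials[OF supported_in_gen_poly homogeneous_gen_poly this
      mpoly_eval_gen_poly_pos[where x=x, OF C lc Suc.prems(3) x]
      metzler_block_hessian_gen_poly[where x=x, OF C lc _ Suc.prems(3) x]]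
  show ?case using Suc.hyps partials by (simp add: pdiff_gen_poly_eq_0)
qed

lemma log_concave_gen_poly:
  fixes u :: "'m::finite \<Rightarrow> nat"
  assumes "0 < C" "log_concave_weights w"
  shows "log_concave_poly (gen_poly C d u w)"
proof (cases "sum u UNIV < d")
  case True
  thus ?thesis by (simp add: log_concave_poly_def gen_poly_eq_0)
next
  case False
  have "0 < mpoly_eval (gen_poly C d u w) x \<and> neg_semidef (hess_log (gen_poly C d u w) x)"
    if "\<forall>j. 0 < x j" for x
    using that False mpoly_eval_gen_poly_pos[OF assms] reverse_cauchy_schwarz_gen_poly[OF _ assms]
    by (auto intro!: neg_semidef_hess_log_if_reverse_cauchy_schwarz[OF supported_in_gen_poly
          homogeneous_gen_poly])
  thus ?thesis by (simp add: log_concave_poly_def)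
qed

lemma fact_add_eq_fact_pochhammer: "(fact (a + b) :: real) = fact a * pochhammer (real a + 1) b"
  using pochhammer_product'[of "1::real" a b] by (simp add: pochhammer_fact add.commute)

lemma pdiffs_gen_poly:
  fixes u :: "'m::finite \<Rightarrow> nat"
  assumes "\<forall>e. \<beta> e \<le> u e" and "sum \<beta> UNIV \<le> d"
  shows "pdiffs \<beta> (gen_poly C d u w) = gen_poly C (d - sum \<beta> UNIV) (\<lambda>e. u e - \<beta> e) (\<lambda>e j. w e (j + \<beta> e))"
proof
  fix \<alpha> :: "'m \<Rightarrow> nat"
  have box: "(\<forall>e. \<alpha> e + \<beta> e \<le> u e) \<longleftrightarrow> (\<forall>e. \<alpha> e \<le> u e - \<beta> e)"
    using assms(1) by (meson le_diff_conv2)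
  have degree: "sum (\<lambda>j. \<alpha> j + \<beta> j) UNIV = d \<longleftrightarrow> sum \<alpha> UNIV = d - sum \<beta> UNIV"
    using assms(2) by (auto simp: sum.distrib)
  have "pochhammer (real (\<alpha> e + 1)) (\<beta> e) * (w e (\<alpha> e + \<beta> e) / fact (\<alpha> e + \<beta> e))
      = w e (\<alpha> e + \<beta> e) / fact (\<alpha> e)" for e
  proof -
    have "pochhammer (real (\<alpha> e) + 1) (\<beta> e) \<noteq> (0::real)" by (simp add: pochhammer_eq_0_iff)
    thus ?thesis unfolding fact_add_eq_fact_pochhammer by (simp add: field_simps)
  qed
  hence "(\<Prod>j\<in>UNIV. pochhammer (real (\<alpha> j + 1)) (\<beta> j)) * (C * (\<Prod>e\<in>UNIV. w e (\<alpha> e + \<beta> e) / fact (\<alpha> e + \<beta> e)))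
       = C * (\<Prod>e\<in>UNIV. w e (\<alpha> e + \<beta> e) / fact (\<alpha> e))"
    by (simp add: prod.distrib[symmetric] mult.left_commute)
  thus "pdiffs \<beta> (gen_poly C d u w) \<alpha> = gen_poly C (d - sum \<beta> UNIV) (\<lambda>e. u e - \<beta> e) (\<lambda>e j. w e (j + \<beta> e)) \<alpha>"
    using box degree by (simp add: pdiffs_def gen_poly_def)
qed

lemma pdiffs_gen_poly_eq_0:
  fixes u :: "'m::finite \<Rightarrow> nat"
  assumes "\<not> ((\<forall>e. \<beta> e \<le> u e) \<and> sum \<beta> UNIV \<le> d)"
  shows "pdiffs \<beta> (gen_poly C d u w) = (\<lambda>_. 0)"
proof
  fix \<alpha> :: "'m \<Rightarrow> nat"
  have "\<not> ((\<forall>e. \<alpha> e + \<beta> e \<le> u e) \<and> sum (\<lambda>j. \<alpha> j + \<beta> j) UNIV = d)"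
    using assms by (auto simp: sum.distrib dest: add_leD2)
  thus "pdiffs \<beta> (gen_poly C d u w) \<alpha> = 0" by (auto simp: pdiffs_def gen_poly_def)
qed

theorem strongly_log_concave_gen_poly:
  fixes u :: "'m::finite \<Rightarrow> nat"
  assumes "0 < C" "log_concave_weights w"
  shows "strongly_log_concave (gen_poly C d u w)"
  unfolding strongly_log_concave_def
proof
  fix \<beta> :: "'m \<Rightarrow> nat"
  show "log_concave_poly (pdiffs \<beta> (gen_poly C d u w))"
  proof (cases "(\<forall>e. \<beta> e \<le> u e) \<and> sum \<beta> UNIV \<le> d")
    case True
    thus ?thesis
      by (simp add: pdiffs_gen_poly log_concave_gen_poly assms(1) log_concave_weights_shift[OF assms(2)])
  qed (simp add: pdiffs_gen_poly_eq_0 log_concave_poly_def)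
qed

section \<open>The congestion polynomial\<close>

lemma log_concave_weights_exp:
  assumes "\<And>e j. f e j + f e (j + 2) \<le> 2 * f e (j + 1)"
  shows "log_concave_weights (\<lambda>e j. exp (f e j))"
  unfolding log_concave_weights_def
  using assms by (simp add: exp_add[symmetric] exp_double[symmetric] power2_eq_square)

definition congestion_weight :: "real \<Rightarrow> real \<Rightarrow> ('m \<Rightarrow> nat \<Rightarrow> real) \<Rightarrow> 'm \<Rightarrow> nat \<Rightarrow> real" where
  "congestion_weight a T c e j = exp (- a * (real j * (real j - 1)) - T * (\<Sum>i=1..j. c e i))"

lemma log_concave_congestion_weight:
  assumes "0 \<le> a" and "0 \<le> T" and "\<And>e. mono (c e)"
  shows "log_concave_weights (congestion_weight a T c)"
proof -
  have "(- a * (real j * (real j - 1)) - T * (\<Sum>i=1..j. c e i))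
      + (- a * (real (j + 2) * (real (j + 2) - 1)) - T * (\<Sum>i=1..j + 2. c e i))
      \<le> 2 * (- a * (real (j + 1) * (real (j + 1) - 1)) - T * (\<Sum>i=1..j + 1. c e i))" for e j
  proof -
    have "T * c e (j + 1) \<le> T * c e (j + 2)"
      using assms(2,3) by (simp add: monoD mult_left_mono)
    thus ?thesis using assms(1) by (simp add: algebra_simps numeral_2_eq_2)
  qed
  thus ?thesis
    unfolding congestion_weight_def[abs_def] by (rule log_concave_weights_exp)
qed

lemma cong_poly_eq_gen_poly:
  fixes k :: "'n::finite \<Rightarrow> nat" and u :: "'m::finite \<Rightarrow> nat"
  defines "K \<equiv> \<Sum>i\<in>UNIV. k i"
  shows "cong_poly k u T c = gen_poly (fact K / (\<Prod>i\<in>UNIV. fact (k i))) K u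
      (congestion_weight ((\<Sum>i\<in>UNIV. real (k i) * (real (k i) - 1)) / (real K)\<^sup>2) T c)"
proof
  fix \<alpha> :: "'m \<Rightarrow> nat"
  define a where "a = (\<Sum>i\<in>UNIV. real (k i) * (real (k i) - 1)) / (real K)\<^sup>2"
  define C :: real where "C = fact K / (\<Prod>i\<in>UNIV. fact (k i))"
  show "cong_poly k u T c \<alpha> = gen_poly C K u (congestion_weight a T c) \<alpha>"
  proof (cases "(\<forall>e. \<alpha> e \<le> u e) \<and> sum \<alpha> UNIV = K")
    case True
    have "(\<Prod>e\<in>UNIV. congestion_weight a T c e (\<alpha> e))
        = exp (- a * (\<Sum>j\<in>UNIV. real (\<alpha> j) * (real (\<alpha> j) - 1))) * exp (- T * Phi_bar c \<alpha>)"
      by (simp add: congestion_weight_def Phi_bar_def exp_sum[symmetric] exp_add[symmetric]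
          sum_subtractf sum_distrib_left sum_negf)
    hence "gen_poly C K u (congestion_weight a T c) \<alpha> = C / (\<Prod>e\<in>UNIV. fact (\<alpha> e))
        * exp (- a * (\<Sum>j\<in>UNIV. real (\<alpha> j) * (real (\<alpha> j) - 1))) * exp (- T * Phi_bar c \<alpha>)"
      using True by (simp add: gen_poly_def prod_dividef)
    thus ?thesis using True by (simp add: cong_poly_def Let_def K_def[symmetric] a_def C_def)
  qed (auto simp: cong_poly_def gen_poly_def Let_def K_def[symmetric])
qed

theorem mainTheorem9:
  fixes k :: "'n::finite \<Rightarrow> nat" and u :: "'m::finite \<Rightarrow> nat"
    and T :: real and c :: "'m \<Rightarrow> nat \<Rightarrow> real"
  assumes "\<And>i. 1 \<le> k i"
    and "0 \<le> T"
    and "\<And>e. mono (c e)"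
  shows "strongly_log_concave (cong_poly k u T c)"
proof -
  have "0 \<le> real n * (real n - 1)" for n :: nat by (cases n) auto
  hence "0 \<le> (\<Sum>i\<in>UNIV. real (k i) * (real (k i) - 1))" by (intro sum_nonneg)
  hence "log_concave_weights (congestion_weight
      ((\<Sum>i\<in>UNIV. real (k i) * (real (k i) - 1)) / (real (\<Sum>i\<in>UNIV. k i))\<^sup>2) T c)"
    using assms(2,3) by (intro log_concave_congestion_weight) simp_all
  thus ?thesis
    unfolding cong_poly_eq_gen_poly by (intro strongly_log_concave_gen_poly) (simp_all add: prod_pos)
qed

end
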